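(* Let $(P,U)$ and $(Q,V)$ be real affine spaces ($P$ modelled on the vector space $U$, $Q$ on $V$), let $g:P\to Q$ be a mapping and $f\in A(Q)$. For each $n\in\mathbb N$, $p\in P$ and $u_1,\dots,u_n\in U$, $$\delta^n(f\circ g)(p;u_1,\dots,u_n)=\sum_{\{I^1,\dots,I^k\}}\delta^k f\Big(g(p);\,\delta^{|I^1|}g(p;\mathbf u^{I^1}),\dots,\delta^{|I^k|}g(p;\mathbf u^{I^k})\Big),$$ where the sum runs over all finite sets $\{I^1,\dots,I^k\}$ ($k\ge0$) of pairwise distinct nonempty subsets of $N=\{1,\dots,n\}$ with $\bigcup_{i=1}^k I^i=N$ (the blocks may overlap).
   Context: $A(Q)$ is the space of real functions on $Q$. For $I=\{i_1<\dots<i_m\}\subset N$, $\mathbf u^I=(u_{i_1},\dots,u_{i_m})$. The $k$-th polarization of $f\in A(Q)$ is $\delta^0f=f$ and, for $k\ge1$, $\delta^kf(q;v_1,\dots,v_k)=(-1)^k\sum_{J\subset\{1,\dots,k\}}(-1)^{|J|}f(q+\sum_{j\in J}v_j)$ (the $J=\emptyset$ term being $f(q)$); it is symmetric in the $v_j$. For a mapping $g:P\to Q$ and $m\ge1$, $\delta^m g(p;u_1,\dots,u_m)=(-1)^m\sum_{J\subset\{1,\dots,m\}}(-1)^{|J|}g(p+\sum_{j\in J}u_j)\in V$ (an affine combination of points with coefficients summing to $0$, hence a vector of $V$). *)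

theory Defs
  imports Main "HOL-Analysis.Analysis"
begin

text \<open>Affine spaces are modelled by their translation vector spaces (after fixing an
origin): points of P are elements of a real vector space 'u, translation is +.\<close>

definition polar :: "('v::real_vector \<Rightarrow> real) \<Rightarrow> 'v \<Rightarrow> 'v list \<Rightarrow> real" where
  "polar f q vs = (-1) ^ length vs *
     (\<Sum>J\<in>Pow {..<length vs}. (-1) ^ card J * f (q + (\<Sum>j\<in>J. vs ! j)))"

definition polar_map :: "('u::real_vector \<Rightarrow> 'v::real_vector) \<Rightarrow> 'u \<Rightarrow> 'u list \<Rightarrow> 'v" where
  "polar_map g p us = (-1) ^ length us *\<^sub>R
     (\<Sum>J\<in>Pow {..<length us}. (-1) ^ card J *\<^sub>R g (p + (\<Sum>j\<in>J. us ! j)))"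

text \<open>An enumeration I^1,...,I^k of a finite set of blocks (any order; polar is symmetric).\<close>
definition enum_blocks :: "'a set set \<Rightarrow> 'a set list" where
  "enum_blocks S = (SOME L. distinct L \<and> set L = S)"

definition sub_tuple :: "(nat \<Rightarrow> 'u) \<Rightarrow> nat set \<Rightarrow> 'u list" where
  "sub_tuple us I = map us (sorted_list_of_set I)"

definition covers :: "nat \<Rightarrow> nat set set set" where
  "covers n = {S. S \<subseteq> {I. I \<subseteq> {1..n} \<and> I \<noteq> {}} \<and> \<Union>S = {1..n}}"

end

theory Submission
  imports Defs
begin

text \<open>Both sides are alternating sums of values of f. Moebius inversion over the subsets
of J gives g (p + u_J) = g p + \<Sum>_{{} \<noteq> I \<subseteq> J} e I, where u_J = \<Sum>_{j \<in> J} u_j and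
e I = \<delta>^|I| g (p; u^I). Hence the left-hand side is
(-1)^n \<Sum>_{J \<subseteq> N} (-1)^|J| F (Pow J - {{}}) with F A = f (g p + \<Sum>_{I \<in> A} e I), while the
right-hand side is \<Sum>_S (-1)^|S| \<Sum>_{A \<subseteq> S} (-1)^|A| F A over the covers S of N.
Inclusion-exclusion over the set T of points left uncovered trades the covering condition
for sums over all families of nonempty subsets of N - T, and on those the inner alternating
sum collapses, by Moebius inversion again, to F (Pow (N - T) - {{}}).\<close>

lemma sum_alternating_supersets:
  assumes "finite S" "U \<subseteq> S"
  shows "(\<Sum>T | T \<subseteq> S \<and> U \<subseteq> T. (-1) ^ card T) =
    (if U = S then (-1) ^ card S else (0::'a::ring_1))"
proof (cases "U = S")
  case True
  then have "{T. T \<subseteq> S \<and> U \<subseteq> T} = {S}" by auto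
  then show ?thesis using True by simp
next
  case False
  with assms show ?thesis
    by (simp add: sum_alternating_cancels card_subsupersets_even_odd psubset_eq)
qed

lemma sum_alternating_Pow:
  assumes "finite S"
  shows "(\<Sum>T\<in>Pow S. (-1) ^ card T) = (if S = {} then 1 else (0::'a::ring_1))"
proof -
  have "Pow S = {T. T \<subseteq> S \<and> {} \<subseteq> T}" by auto
  then show ?thesis
    using sum_alternating_supersets[OF assms empty_subsetI] by (metis card.empty power_0)
qed

lemma inclusion_exclusion_symmetric_scaleR:
  fixes f :: "'a set \<Rightarrow> 'b::real_vector"
  assumes g: "\<And>S. finite S \<Longrightarrow> g S = (\<Sum>T\<in>Pow S. (-1) ^ card T *\<^sub>R f T)"
    and "finite S"
  shows "f S = (\<Sum>T\<in>Pow S. (-1) ^ card T *\<^sub>R g T)"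
proof -
  have "(\<Sum>T\<in>Pow S. (-1) ^ card T *\<^sub>R g T) =
      (\<Sum>T\<in>Pow S. \<Sum>U | U \<in> Pow S \<and> U \<subseteq> T. ((-1) ^ card T * (-1) ^ card U) *\<^sub>R f U)"
  proof (intro sum.cong refl)
    fix T assume "T \<in> Pow S"
    then have "{U. U \<in> Pow S \<and> U \<subseteq> T} = Pow T" and "finite T"
      using \<open>finite S\<close> finite_subset by auto
    then show "(-1) ^ card T *\<^sub>R g T =
        (\<Sum>U | U \<in> Pow S \<and> U \<subseteq> T. ((-1) ^ card T * (-1) ^ card U) *\<^sub>R f U)"
      by (simp add: g scaleR_sum_right)
  qed
  also have "\<dots> =
      (\<Sum>U\<in>Pow S. ((\<Sum>T | T \<subseteq> S \<and> U \<subseteq> T. (-1::real) ^ card T) * (-1) ^ card U) *\<^sub>R f U)"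
    by (subst sum.swap_restrict)
      (simp_all add: \<open>finite S\<close> scaleR_sum_left sum_distrib_right Pow_def)
  also have "\<dots> = (\<Sum>U\<in>Pow S. if U = S then f S else 0)"
    by (intro sum.cong refl) (simp add: sum_alternating_supersets \<open>finite S\<close> flip: power_add)
  also have "\<dots> = f S"
    using \<open>finite S\<close> by simp
  finally show ?thesis ..
qed

lemma sum_covers_inclusion_exclusion:
  fixes X :: "'a set set \<Rightarrow> 'b::comm_ring_1"
  assumes "finite N" "finite C" "\<Union>C \<subseteq> N"
  shows "(\<Sum>S | S \<subseteq> C \<and> \<Union>S = N. X S) =
    (\<Sum>T\<in>Pow N. (-1) ^ card T * (\<Sum>S | S \<subseteq> C \<and> T \<inter> \<Union>S = {}. X S))"
proof -
  have "(\<Sum>S | S \<subseteq> C \<and> \<Union>S = N. X S) = (\<Sum>S\<in>Pow C. if \<Union>S = N then X S else 0)"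
    using sum.inter_filter[of "Pow C" X "\<lambda>S. \<Union>S = N"] assms(2) by (simp add: Pow_def)
  also have "\<dots> = (\<Sum>S\<in>Pow C. \<Sum>T | T \<in> Pow N \<and> T \<inter> \<Union>S = {}. (-1) ^ card T * X S)"
  proof (intro sum.cong refl)
    fix S assume "S \<in> Pow C"
    then have "\<Union>S \<subseteq> N" using assms(3) by auto
    moreover have "{T. T \<in> Pow N \<and> T \<inter> \<Union>S = {}} = Pow (N - \<Union>S)" by auto
    ultimately show "(if \<Union>S = N then X S else 0) =
        (\<Sum>T | T \<in> Pow N \<and> T \<inter> \<Union>S = {}. (-1) ^ card T * X S)"
      using assms(1) by (auto simp: sum_alternating_Pow simp flip: sum_distrib_right)
  qed
  also have "\<dots> = (\<Sum>T\<in>Pow N. \<Sum>S | S \<in> Pow C \<and> T \<inter> \<Union>S = {}. (-1) ^ card T * X S)"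
    using assms(1,2) by (intro sum.swap_restrict) auto
  also have "\<dots> = (\<Sum>T\<in>Pow N. (-1) ^ card T * (\<Sum>S | S \<subseteq> C \<and> T \<inter> \<Union>S = {}. X S))"
    by (simp add: sum_distrib_left)
  finally show ?thesis .
qed

lemma sum_covers_alternating:
  fixes F :: "'a set set \<Rightarrow> 'b::comm_ring_1"
  assumes "finite N"
  shows "(\<Sum>S | S \<subseteq> Pow N - {{}} \<and> \<Union>S = N.
      (-1) ^ card S * (\<Sum>A\<in>Pow S. (-1) ^ card A * F A)) =
    (-1) ^ card N * (\<Sum>J\<in>Pow N. (-1) ^ card J * F (Pow J - {{}}))"
proof -
  have collapse: "(\<Sum>S\<in>Pow D. (-1) ^ card S * (\<Sum>A\<in>Pow S. (-1) ^ card A * F A)) = F D"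
    if "finite D" for D
    by (rule inclusion_exclusion_symmetric[OF _ that, symmetric]) (rule refl)
  have avoiding: "{S. S \<subseteq> Pow N - {{}} \<and> T \<inter> \<Union>S = {}} = Pow (Pow (N - T) - {{}})" for T
    by auto
  have sign: "(-1) ^ card (N - J) = (-1) ^ card N * ((-1) ^ card J :: 'b)" if "J \<subseteq> N" for J
    using that assms card_mono[OF assms that]
    by (simp add: card_Diff_subset finite_subset neg_one_power_add_eq_neg_one_power_diff
        flip: power_add)
  have "(\<Sum>S | S \<subseteq> Pow N - {{}} \<and> \<Union>S = N.
        (-1) ^ card S * (\<Sum>A\<in>Pow S. (-1) ^ card A * F A)) =
      (\<Sum>T\<in>Pow N. (-1) ^ card T *
        (\<Sum>S\<in>Pow (Pow (N - T) - {{}}). (-1) ^ card S * (\<Sum>A\<in>Pow S. (-1) ^ card A * F A)))"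
    unfolding avoiding[symmetric] by (rule sum_covers_inclusion_exclusion) (use assms in auto)
  also have "\<dots> = (\<Sum>T\<in>Pow N. (-1) ^ card T * F (Pow (N - T) - {{}}))"
    using assms by (simp add: collapse)
  also have "\<dots> = (\<Sum>J\<in>Pow N. (-1) ^ card (N - J) * F (Pow J - {{}}))"
    by (rule sum.reindex_bij_witness[where i = "\<lambda>J. N - J" and j = "\<lambda>J. N - J"])
      (auto simp: double_diff)
  also have "\<dots> = (-1) ^ card N * (\<Sum>J\<in>Pow N. (-1) ^ card J * F (Pow J - {{}}))"
    by (simp add: sign sum_distrib_left mult.assoc)
  finally show ?thesis .
qed

lemma polar_eq_polar_map: "polar = polar_map"
  by (intro ext) (simp add: polar_def polar_map_def)

lemma polar_map_map_distinct:
  assumes "distinct L"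
  shows "polar_map g q (map h L) =
    (-1) ^ length L *\<^sub>R (\<Sum>B\<in>Pow (set L). (-1) ^ card B *\<^sub>R g (q + sum h B))"
proof -
  have inj: "inj_on ((!) L) {..<length L}"
    using assms by (simp add: inj_on_nth)
  have Pow_set: "Pow (set L) = image ((!) L) ` Pow {..<length L}"
    by (rule image_Pow_surj[symmetric]) (simp add: lessThan_atLeast0 nth_image)
  have "(\<Sum>B\<in>Pow (set L). (-1) ^ card B *\<^sub>R g (q + sum h B)) =
      (\<Sum>J\<in>Pow {..<length L}. (-1) ^ card J *\<^sub>R g (q + (\<Sum>j\<in>J. map h L ! j)))"
    unfolding Pow_set
  proof (subst sum.reindex[OF inj_on_image_Pow[OF inj]], intro sum.cong refl)
    fix J assume "J \<in> Pow {..<length L}"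
    then have "inj_on ((!) L) J" "\<forall>j\<in>J. j < length L"
      using inj inj_on_subset by auto
    then show "((\<lambda>B. (-1) ^ card B *\<^sub>R g (q + sum h B)) \<circ> image ((!) L)) J =
        (-1) ^ card J *\<^sub>R g (q + (\<Sum>j\<in>J. map h L ! j))"
      by (simp add: card_image sum.reindex)
  qed
  then show ?thesis
    by (simp add: polar_map_def)
qed

lemma polar_map_sub_tuple:
  assumes "finite I"
  shows "polar_map g p (sub_tuple us I) =
    (-1) ^ card I *\<^sub>R (\<Sum>K\<in>Pow I. (-1) ^ card K *\<^sub>R g (p + sum us K))"
  using polar_map_map_distinct[of "sorted_list_of_set I" g p us] assms
  by (simp add: sub_tuple_def)

lemma sum_polar_map_sub_tuple:
  assumes "finite J"
  shows "(\<Sum>I\<in>Pow J. polar_map g p (sub_tuple us I)) = g (p + sum us J)"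
proof -
  have "g (p + sum us J) =
      (\<Sum>I\<in>Pow J. (-1) ^ card I *\<^sub>R ((-1) ^ card I *\<^sub>R polar_map g p (sub_tuple us I)))"
    by (rule inclusion_exclusion_symmetric_scaleR[OF _ assms]) (simp add: polar_map_sub_tuple)
  then show ?thesis
    by (simp flip: power_add)
qed

lemma enum_blocks:
  assumes "finite S"
  shows "distinct (enum_blocks S)" "set (enum_blocks S) = S"
proof -
  have "distinct (enum_blocks S) \<and> set (enum_blocks S) = S"
    unfolding enum_blocks_def by (rule someI_ex) (meson finite_distinct_list assms)
  then show "distinct (enum_blocks S)" "set (enum_blocks S) = S" by auto
qed

lemma polar_enum_blocks:
  assumes "finite S"
  shows "polar f q (map h (enum_blocks S)) =
    (-1) ^ card S * (\<Sum>A\<in>Pow S. (-1) ^ card A * f (q + sum h A))"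
proof -
  have "length (enum_blocks S) = card S"
    by (metis enum_blocks assms distinct_card)
  then show ?thesis
    using polar_map_map_distinct[OF enum_blocks(1)[OF assms], of f q h]
    by (simp add: polar_eq_polar_map enum_blocks(2)[OF assms])
qed

lemma covers_eq: "covers n = {S. S \<subseteq> Pow {1..n} - {{}} \<and> \<Union>S = {1..n}}"
  unfolding covers_def by blast

lemma finite_cover: "S \<in> covers n \<Longrightarrow> finite S"
  unfolding covers_eq by (auto intro: finite_subset)

theorem proposition4:
  fixes g :: "'u::real_vector \<Rightarrow> 'v::real_vector" and f :: "'v \<Rightarrow> real"
    and n :: nat and p :: 'u and us :: "nat \<Rightarrow> 'u"
  shows "polar (f \<circ> g) p (map us [1..<n+1]) =
    (\<Sum>S\<in>covers n. polar f (g p)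
        (map (\<lambda>I. polar_map g p (sub_tuple us I)) (enum_blocks S)))"
proof -
  define e where "e I = polar_map g p (sub_tuple us I)" for I
  define F where "F A = f (g p + sum e A)" for A
  have g_expansion: "g (p + sum us J) = g p + sum e (Pow J - {{}})" if "finite J" for J
  proof -
    have "g (p + sum us J) = sum e (Pow J)"
      by (simp add: e_def sum_polar_map_sub_tuple that)
    also have "\<dots> = e {} + sum e (Pow J - {{}})"
      by (rule sum.remove) (simp_all add: that)
    also have "e {} = g p"
      by (simp add: e_def sub_tuple_def polar_map_def)
    finally show ?thesis .
  qed
  have "polar (f \<circ> g) p (map us [1..<n+1]) =
      (-1) ^ n * (\<Sum>J\<in>Pow {1..n}. (-1) ^ card J * f (g (p + sum us J)))"
    using polar_map_sub_tuple[of "{1..n}" "f \<circ> g" p us]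
    by (simp add: polar_eq_polar_map sub_tuple_def atLeastLessThanSuc_atLeastAtMost[symmetric])
  also have "\<dots> = (-1) ^ n * (\<Sum>J\<in>Pow {1..n}. (-1) ^ card J * F (Pow J - {{}}))"
    by (simp add: F_def g_expansion finite_subset)
  also have "\<dots> = (\<Sum>S\<in>covers n. (-1) ^ card S * (\<Sum>A\<in>Pow S. (-1) ^ card A * F A))"
    using sum_covers_alternating[of "{1..n}" F] by (simp add: covers_eq)
  also have "\<dots> = (\<Sum>S\<in>covers n. polar f (g p) (map e (enum_blocks S)))"
    by (intro sum.cong refl) (simp add: polar_enum_blocks finite_cover F_def)
  finally show ?thesis
    unfolding e_def .
qed

end
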